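(* Let $d\ge1$ and $L\ge2$ be integers, $\Phi\in\mathbb{R}^{d\times d}$, and $W_1,\dots,W_L\in\mathbb{R}^{d\times d}$, with $\mathcal{R}=\tfrac12\|W_{L:1}-\Phi\|_F^2$. Suppose $\|W_l\|_2\le\alpha$ for $l=1,\dots,L-1$ and $\|W_L\|_2\le\beta$, where $\alpha,\beta\ge0$ and, for some $\phi>0$, $1\le\alpha^{2(L-1)}<L\phi^2$ and $\alpha^{2(L-1)}\beta^2<2\phi^2$. For $\eta>0$ let $W_l^+=W_l-\eta\nabla_l\mathcal{R}$, $l=1,\dots,L$, and let $D_l=W_{l+1}^\intercal W_{l+1}-W_lW_l^\intercal$, $D_l^+=(W_{l+1}^+)^\intercal W_{l+1}^+-W_l^+(W_l^+)^\intercal$ for $l=1,\dots,L-1$. Then $$\|D_l^+-D_l\|_2\le8\eta^2\phi^2\mathcal{R}\quad(l=1,\dots,L-2),\qquad\|D_{L-1}^+-D_{L-1}\|_2\le2\eta^2(L+2)\phi^2\mathcal{R}.$$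
   Context: For $l_2\ge l_1$ write $W_{l_2:l_1}=W_{l_2}\cdots W_{l_1}$, empty products being the identity $I$. $\nabla_l\mathcal{R}=W_{L:l+1}^\intercal(W_{L:1}-\Phi)W_{l-1:1}^\intercal$ is the gradient of $\mathcal{R}(W_1,\dots,W_L)=\tfrac12\|W_L\cdots W_1-\Phi\|_F^2$ with respect to $W_l$, evaluated at $(W_1,\dots,W_L)$. $\|\cdot\|_2$ is the spectral norm and $\|\cdot\|_F$ the Frobenius norm. *)

theory Defs
  imports "HOL-Analysis.Analysis"
begin

text \<open>Square d x d real matrices are \<open>real^'n^'n\<close> (d = CARD('n) \<ge> 1).
  Spectral norm = operator norm of the induced linear map; Frobenius norm explicit.\<close>

definition spec_norm :: "real^'n^'n \<Rightarrow> real" where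
  "spec_norm A = onorm (\<lambda>x. A *v x)"

definition frob_norm :: "real^'n^'n \<Rightarrow> real" where
  "frob_norm A = sqrt (\<Sum>i\<in>UNIV. \<Sum>j\<in>UNIV. (A $ i $ j)^2)"

text \<open>W_{hi:lo} = W hi ** W (hi-1) ** ... ** W lo; identity if hi < lo.\<close>
definition mprod :: "(nat \<Rightarrow> real^'n^'n) \<Rightarrow> nat \<Rightarrow> nat \<Rightarrow> real^'n^'n" where
  "mprod W hi lo = foldl (\<lambda>acc i. acc ** W i) (mat 1) (rev [lo..<Suc hi])"

definition risk :: "nat \<Rightarrow> real^'n^'n \<Rightarrow> (nat \<Rightarrow> real^'n^'n) \<Rightarrow> real" where
  "risk L Phi W = (1/2) * (frob_norm (mprod W L 1 - Phi))^2"

definition grad :: "nat \<Rightarrow> real^'n^'n \<Rightarrow> (nat \<Rightarrow> real^'n^'n) \<Rightarrow> nat \<Rightarrow> real^'n^'n" where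
  "grad L Phi W l = transpose (mprod W L (l+1)) ** (mprod W L 1 - Phi) ** transpose (mprod W (l-1) 1)"

definition gd_step :: "nat \<Rightarrow> real^'n^'n \<Rightarrow> real \<Rightarrow> (nat \<Rightarrow> real^'n^'n) \<Rightarrow> nat \<Rightarrow> real^'n^'n" where
  "gd_step L Phi eta W l = W l - eta *\<^sub>R grad L Phi W l"

definition imbalance :: "(nat \<Rightarrow> real^'n^'n) \<Rightarrow> nat \<Rightarrow> real^'n^'n" where
  "imbalance W l = transpose (W (l+1)) ** W (l+1) - W l ** transpose (W l)"

end

theory Submission imports Defs begin

(* The gradients are balanced: W_{l+1}^T nabla_{l+1} = nabla_l W_l^T, as both sides equal
   W_{L:l+1}^T (W_{L:1} - Phi) W_{l:1}^T. Hence the terms of D_l^+ - D_l that are linear in eta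
   cancel, leaving eta^2 (nabla_{l+1}^T nabla_{l+1} - nabla_l nabla_l^T), whose spectral norm is at
   most eta^2 (|nabla_{l+1}|^2 + |nabla_l|^2). Submultiplicativity and |.|_2 <= |.|_F give
   |nabla_l| <= beta alpha^(L-2) |W_{L:1} - Phi|_F for l < L and |nabla_L| <= alpha^(L-1) |W_{L:1} - Phi|_F.
   The hypotheses force alpha >= 1, so the squared bounds are at most 4 phi^2 R and 2 L phi^2 R. *)

lemma matrix_diff_ldistrib: "A ** (B - C) = A ** B - A ** C"
  for A :: "'a::ring_1^'n^'m"
  by (simp add: matrix_matrix_mult_def vec_eq_iff algebra_simps sum_subtractf)

lemma matrix_diff_rdistrib: "(A - B) ** C = A ** C - B ** C"
  for A :: "'a::ring_1^'n^'m"
  by (simp add: matrix_matrix_mult_def vec_eq_iff algebra_simps sum_subtractf)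

lemma transpose_diff: "transpose (A - B) = transpose A - transpose B"
  by (simp add: transpose_def vec_eq_iff)

lemma spec_norm_nonneg: "0 \<le> spec_norm A"
  unfolding spec_norm_def by (rule onorm_pos_le) simp

lemma norm_mult_vec_le_spec_norm: "norm (A *v x) \<le> spec_norm A * norm x"
  unfolding spec_norm_def by (rule onorm) simp

lemma spec_norm_le: "(\<And>x. norm (A *v x) \<le> b * norm x) \<Longrightarrow> spec_norm A \<le> b"
  unfolding spec_norm_def by (rule onorm_le)

lemma spec_norm_mat_1: "spec_norm (mat 1 :: real^'n^'n) = 1"
proof -
  have "(*v) (mat 1 :: real^'n^'n) = (\<lambda>x. x)"
    by (simp add: fun_eq_iff)
  then show ?thesis
    unfolding spec_norm_def using onorm_id[where 'a="real^'n"] by simp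
qed

lemma spec_norm_mult: "spec_norm (A ** B) \<le> spec_norm A * spec_norm B"
proof -
  have "(\<lambda>x. (A ** B) *v x) = (\<lambda>x. A *v x) \<circ> (\<lambda>x. B *v x)"
    by (simp add: o_def matrix_vector_mul_assoc)
  then show ?thesis
    unfolding spec_norm_def by (simp add: onorm_compose)
qed

lemma spec_norm_diff: "spec_norm (A - B) \<le> spec_norm A + spec_norm B"
proof -
  have "(\<lambda>x. (A - B) *v x) = (\<lambda>x. A *v x + - (B *v x))"
    by (simp add: matrix_vector_mult_diff_rdistrib)
  then show ?thesis
    unfolding spec_norm_def
    using onorm_triangle[of "\<lambda>x. A *v x" "\<lambda>x. - (B *v x)"]
    by (simp add: onorm_neg bounded_linear_minus)
qed

lemma spec_norm_scaleR: "spec_norm (c *\<^sub>R A) = \<bar>c\<bar> * spec_norm A"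
proof -
  have "(\<lambda>x. (c *\<^sub>R A) *v x) = (\<lambda>x. c *\<^sub>R (A *v x))"
    by (simp add: scaleR_matrix_vector_assoc)
  then show ?thesis
    unfolding spec_norm_def by (simp add: onorm_scaleR)
qed

lemma spec_norm_transpose_le: "spec_norm (transpose A) \<le> spec_norm A"
proof (rule spec_norm_le)
  fix x
  let ?y = "transpose A *v x"
  have "(norm ?y)\<^sup>2 = inner (x v* A) ?y"
    by (simp add: power2_norm_eq_inner)
  also have "\<dots> = inner x (A *v ?y)"
    by (rule dot_lmul_matrix)
  also have "\<dots> \<le> norm x * (spec_norm A * norm ?y)"
    by (rule order_trans[OF norm_cauchy_schwarz mult_left_mono[OF norm_mult_vec_le_spec_norm]]) simp
  finally have "norm ?y * norm ?y \<le> (spec_norm A * norm x) * norm ?y"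
    by (simp add: power2_eq_square algebra_simps)
  then show "norm ?y \<le> spec_norm A * norm x"
    using spec_norm_nonneg[of A] by (cases "norm ?y = 0") auto
qed

lemma spec_norm_transpose: "spec_norm (transpose A) = spec_norm A"
  using spec_norm_transpose_le[of A] spec_norm_transpose_le[of "transpose A"] by simp

lemma norm_vec_power2: "(norm v)\<^sup>2 = (\<Sum>i\<in>UNIV. (norm (v $ i))\<^sup>2)"
  unfolding norm_vec_def L2_set_def by (simp add: sum_nonneg)

lemma frob_norm_eq_norm: "frob_norm A = norm A"
  unfolding frob_norm_def norm_vec_def L2_set_def by (simp add: sum_nonneg)

lemma frob_norm_nonneg: "0 \<le> frob_norm A"
  by (simp add: frob_norm_eq_norm)

lemma spec_norm_le_frob_norm: "spec_norm A \<le> frob_norm A"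
proof (rule spec_norm_le)
  fix x
  have "(norm (A *v x))\<^sup>2 = (\<Sum>i\<in>UNIV. (inner (A $ i) x)\<^sup>2)"
    unfolding norm_vec_power2[of "A *v x"] by (simp add: matrix_vector_mul_component)
  also have "\<dots> \<le> (\<Sum>i\<in>UNIV. (norm (A $ i))\<^sup>2 * (norm x)\<^sup>2)"
    using Cauchy_Schwarz_ineq by (intro sum_mono) (simp add: power2_norm_eq_inner)
  also have "\<dots> = (frob_norm A * norm x)\<^sup>2"
    by (simp add: frob_norm_eq_norm power_mult_distrib norm_vec_power2[of A] sum_distrib_right)
  finally show "norm (A *v x) \<le> frob_norm A * norm x"
    by (rule power2_le_imp_le) (simp add: frob_norm_eq_norm)
qed

lemma foldl_matrix_mult:
  fixes W :: "nat \<Rightarrow> 'a::semiring_1^'n^'n" and A :: "'a^'n^'n"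
  shows
  "foldl (\<lambda>acc i. acc ** W i) A xs = A ** foldl (\<lambda>acc i. acc ** W i) (mat 1) xs"
proof (induction xs arbitrary: A)
  case (Cons x xs)
  show ?case using Cons.IH[of "A ** W x"] Cons.IH[of "W x"] by (simp add: matrix_mul_assoc)
qed simp

lemma mprod_split:
  assumes "lo \<le> Suc m" "m \<le> hi"
  shows "mprod W hi lo = mprod W hi (Suc m) ** mprod W m lo"
proof -
  have "rev [lo..<Suc hi] = rev [Suc m..<Suc hi] @ rev [lo..<Suc m]"
    using assms upt_add_eq_append[of lo "Suc m" "hi - m"] by simp
  then show ?thesis unfolding mprod_def by (simp add: foldl_matrix_mult[of W "foldl _ _ _"])
qed

lemma mprod_empty: "hi < lo \<Longrightarrow> mprod W hi lo = mat 1"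
  by (simp add: mprod_def)

lemma mprod_Suc_left: "lo \<le> Suc hi \<Longrightarrow> mprod W (Suc hi) lo = W (Suc hi) ** mprod W hi lo"
  using mprod_split[of lo hi "Suc hi" W] by (simp add: mprod_def)

lemma mprod_Suc_right: "lo \<le> hi \<Longrightarrow> mprod W hi lo = mprod W hi (Suc lo) ** W lo"
  using mprod_split[of lo lo hi W] by (simp add: mprod_def)

lemma spec_norm_mprod_le:
  assumes "0 \<le> a" "\<forall>i\<in>{lo..hi}. spec_norm (W i) \<le> a"
  shows "spec_norm (mprod W hi lo) \<le> a ^ (Suc hi - lo)"
  using assms(2)
proof (induction hi)
  case 0
  then show ?case by (cases lo) (auto simp: mprod_def spec_norm_mat_1)
next
  case (Suc hi)
  show ?case
  proof (cases "lo \<le> Suc hi")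
    case True
    have "spec_norm (mprod W (Suc hi) lo) \<le> spec_norm (W (Suc hi)) * spec_norm (mprod W hi lo)"
      unfolding mprod_Suc_left[OF True] by (rule spec_norm_mult)
    also have "\<dots> \<le> a * a ^ (Suc hi - lo)"
      using Suc True by (intro mult_mono spec_norm_nonneg assms(1)) auto
    finally show ?thesis
      using True by (simp add: Suc_diff_le)
  qed (simp add: mprod_empty spec_norm_mat_1)
qed

lemma grad_balance:
  assumes "1 \<le> l" "l < L"
  shows "transpose (W (l+1)) ** grad L Phi W (l+1) = grad L Phi W l ** transpose (W l)"
proof -
  have "mprod W L (l+1) = mprod W L (l+2) ** W (l+1)"
    using assms by (simp add: mprod_Suc_right)
  moreover have "mprod W l 1 = W l ** mprod W (l-1) 1"
    using assms mprod_Suc_left[of 1 "l-1" W] by simp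
  ultimately show ?thesis
    unfolding grad_def by (simp add: matrix_transpose_mul matrix_mul_assoc)
qed

lemma spec_norm_grad_le:
  "spec_norm (grad L Phi W l)
     \<le> spec_norm (mprod W L (l+1)) * frob_norm (mprod W L 1 - Phi) * spec_norm (mprod W (l-1) 1)"
proof -
  let ?E = "mprod W L 1 - Phi"
  have "spec_norm (grad L Phi W l)
      \<le> spec_norm (transpose (mprod W L (l+1))) * spec_norm ?E * spec_norm (transpose (mprod W (l-1) 1))"
    unfolding grad_def
    by (intro order_trans[OF spec_norm_mult] mult_right_mono spec_norm_mult spec_norm_nonneg)
  also have "\<dots> \<le> spec_norm (mprod W L (l+1)) * frob_norm ?E * spec_norm (mprod W (l-1) 1)"
    unfolding spec_norm_transpose
    by (intro mult_right_mono mult_left_mono spec_norm_le_frob_norm spec_norm_nonneg)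
  finally show ?thesis .
qed

lemma spec_norm_grad_inner_le:
  assumes "\<forall>i\<in>{1..L-1}. spec_norm (W i) \<le> alpha" "spec_norm (W L) \<le> beta"
    and "0 \<le> alpha" "0 \<le> beta" "1 \<le> l" "l < L"
  shows "spec_norm (grad L Phi W l) \<le> beta * alpha ^ (L-2) * frob_norm (mprod W L 1 - Phi)"
proof -
  let ?F = "frob_norm (mprod W L 1 - Phi)"
  have "\<forall>i\<in>{l+1..L-1}. spec_norm (W i) \<le> alpha" "\<forall>i\<in>{1..l-1}. spec_norm (W i) \<le> alpha"
    using assms(1,6) by auto
  from this[THEN spec_norm_mprod_le[OF assms(3)]]
  have middle: "spec_norm (mprod W (L-1) (l+1)) \<le> alpha ^ (L-1-l)"
    and lower: "spec_norm (mprod W (l-1) 1) \<le> alpha ^ (l-1)"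
    using assms(5,6) by (simp_all add: Suc_diff_Suc)
  have "mprod W L (l+1) = W L ** mprod W (L-1) (l+1)"
    using assms(6) mprod_Suc_left[of "l+1" "L-1" W] by simp
  then have "spec_norm (mprod W L (l+1)) \<le> spec_norm (W L) * spec_norm (mprod W (L-1) (l+1))"
    by (simp add: spec_norm_mult)
  also have "\<dots> \<le> beta * alpha ^ (L-1-l)"
    by (rule mult_mono[OF assms(2) middle assms(4) spec_norm_nonneg])
  finally have upper: "spec_norm (mprod W L (l+1)) \<le> beta * alpha ^ (L-1-l)" .
  have "spec_norm (grad L Phi W l) \<le> beta * alpha ^ (L-1-l) * ?F * alpha ^ (l-1)"
    using upper lower assms(3,4)
    by (intro order_trans[OF spec_norm_grad_le] mult_mono mult_right_mono frob_norm_nonneg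
        spec_norm_nonneg mult_nonneg_nonneg zero_le_power) simp_all
  moreover have "L-2 = (L-1-l) + (l-1)"
    using assms(5,6) by simp
  ultimately show ?thesis
    by (simp add: power_add mult_ac)
qed

lemma spec_norm_grad_last_le:
  assumes "\<forall>i\<in>{1..L-1}. spec_norm (W i) \<le> alpha" "0 \<le> alpha"
  shows "spec_norm (grad L Phi W L) \<le> alpha ^ (L-1) * frob_norm (mprod W L 1 - Phi)"
proof -
  have "spec_norm (grad L Phi W L) \<le> frob_norm (mprod W L 1 - Phi) * spec_norm (mprod W (L-1) 1)"
    using spec_norm_grad_le[of L Phi W L] by (simp add: mprod_empty spec_norm_mat_1)
  also have "\<dots> \<le> frob_norm (mprod W L 1 - Phi) * alpha ^ (L-1)"
    using assms by (intro mult_left_mono order_trans[OF spec_norm_mprod_le] frob_norm_nonneg) auto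
  finally show ?thesis
    by (simp add: mult.commute)
qed

lemma spec_norm_grad_inner_power2_le:
  assumes "\<forall>i\<in>{1..L-1}. spec_norm (W i) \<le> alpha" "spec_norm (W L) \<le> beta"
    and "1 \<le> alpha" "0 \<le> beta" "1 \<le> l" "l < L"
  shows "(spec_norm (grad L Phi W l))\<^sup>2
    \<le> alpha ^ (2*(L-1)) * beta\<^sup>2 * (frob_norm (mprod W L 1 - Phi))\<^sup>2"
proof -
  have "spec_norm (grad L Phi W l) \<le> beta * alpha ^ (L-2) * frob_norm (mprod W L 1 - Phi)"
    using assms by (intro spec_norm_grad_inner_le) auto
  also have "\<dots> \<le> beta * alpha ^ (L-1) * frob_norm (mprod W L 1 - Phi)"
    using assms by (intro mult_right_mono mult_left_mono power_increasing frob_norm_nonneg) auto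
  finally have "(spec_norm (grad L Phi W l))\<^sup>2 \<le> (beta * alpha ^ (L-1) * frob_norm (mprod W L 1 - Phi))\<^sup>2"
    by (intro power_mono spec_norm_nonneg)
  then show ?thesis
    by (simp add: power_mult_distrib power_mult[symmetric] mult.commute)
qed

lemma spec_norm_grad_last_power2_le:
  assumes "\<forall>i\<in>{1..L-1}. spec_norm (W i) \<le> alpha" "0 \<le> alpha"
  shows "(spec_norm (grad L Phi W L))\<^sup>2 \<le> alpha ^ (2*(L-1)) * (frob_norm (mprod W L 1 - Phi))\<^sup>2"
proof -
  have "(spec_norm (grad L Phi W L))\<^sup>2 \<le> (alpha ^ (L-1) * frob_norm (mprod W L 1 - Phi))\<^sup>2"
    using spec_norm_grad_last_le[OF assms] by (intro power_mono spec_norm_nonneg)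
  then show ?thesis
    by (simp add: power_mult_distrib power_mult[symmetric] mult.commute)
qed

lemma balanced_step_imbalance_diff:
  fixes A a :: "real^'n^'m" and B b :: "real^'k^'n"
  assumes "transpose A ** a = b ** transpose B"
  shows "(transpose (A - e *\<^sub>R a) ** (A - e *\<^sub>R a) - (B - e *\<^sub>R b) ** transpose (B - e *\<^sub>R b))
      - (transpose A ** A - B ** transpose B)
    = e\<^sup>2 *\<^sub>R (transpose a ** a - b ** transpose b)"
proof -
  have "transpose a ** A = B ** transpose b"
    using arg_cong[OF assms, of transpose] by (simp add: matrix_transpose_mul)
  with assms show ?thesis
    by (simp add: transpose_diff matrix_diff_ldistrib matrix_diff_rdistrib transpose_scalar
        scalar_matrix_assoc[symmetric] matrix_scalar_ac algebra_simps power2_eq_square)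
qed

lemma imbalance_gd_step_diff:
  assumes "1 \<le> l" "l < L"
  shows "imbalance (gd_step L Phi eta W) l - imbalance W l
    = eta\<^sup>2 *\<^sub>R (transpose (grad L Phi W (l+1)) ** grad L Phi W (l+1)
                    - grad L Phi W l ** transpose (grad L Phi W l))"
  unfolding imbalance_def gd_step_def
  by (rule balanced_step_imbalance_diff[OF grad_balance[OF assms]])

lemma spec_norm_imbalance_gd_step_diff_le:
  assumes "1 \<le> l" "l < L"
  shows "spec_norm (imbalance (gd_step L Phi eta W) l - imbalance W l)
    \<le> eta\<^sup>2 * ((spec_norm (grad L Phi W (l+1)))\<^sup>2 + (spec_norm (grad L Phi W l))\<^sup>2)"
proof -
  have "spec_norm (transpose G ** G) \<le> (spec_norm G)\<^sup>2"
    and "spec_norm (G ** transpose G) \<le> (spec_norm G)\<^sup>2" for G :: "real^'n^'n"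
    using spec_norm_mult[of "transpose G" G] spec_norm_mult[of G "transpose G"]
    by (simp_all add: spec_norm_transpose power2_eq_square)
  then show ?thesis
    unfolding imbalance_gd_step_diff[OF assms] spec_norm_scaleR abs_power2
    by (intro mult_left_mono order_trans[OF spec_norm_diff] add_mono) auto
qed

theorem lemma9:
  fixes W :: "nat \<Rightarrow> real^'n^'n" and Phi :: "real^'n^'n"
    and L :: nat and alpha beta phi eta :: real
  assumes "L \<ge> 2"
    and "\<forall>l\<in>{1..L-1}. spec_norm (W l) \<le> alpha"
    and "spec_norm (W L) \<le> beta"
    and "alpha \<ge> 0" and "beta \<ge> 0" and "phi > 0"
    and "1 \<le> alpha ^ (2*(L-1))"
    and "alpha ^ (2*(L-1)) < real L * phi^2"
    and "alpha ^ (2*(L-1)) * beta^2 < 2 * phi^2"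
    and "eta > 0"
  shows "(\<forall>l\<in>{1..L-2}.
            spec_norm (imbalance (gd_step L Phi eta W) l - imbalance W l)
              \<le> 8 * eta^2 * phi^2 * risk L Phi W)
       \<and> spec_norm (imbalance (gd_step L Phi eta W) (L-1) - imbalance W (L-1))
              \<le> 2 * eta^2 * (real L + 2) * phi^2 * risk L Phi W"
proof -
  let ?G = "grad L Phi W"
  define f where "f = frob_norm (mprod W L 1 - Phi)"
  have risk: "risk L Phi W = f\<^sup>2 / 2"
    by (simp add: risk_def f_def)
  have "1 \<le> alpha"
    using power_less_one_iff[OF assms(4), of "2*(L-1)"] assms(1,7) by auto
  have inner: "(spec_norm (?G l))\<^sup>2 \<le> 2 * phi\<^sup>2 * f\<^sup>2" if "1 \<le> l" "l < L" for l
    using order_trans[OF spec_norm_grad_inner_power2_le[OF assms(2,3) \<open>1 \<le> alpha\<close> assms(5) that]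
        mult_right_mono[OF less_imp_le[OF assms(9)] zero_le_power2]]
    by (simp add: f_def)
  have last: "(spec_norm (?G L))\<^sup>2 \<le> real L * phi\<^sup>2 * f\<^sup>2"
    using order_trans[OF spec_norm_grad_last_power2_le[OF assms(2,4)]
        mult_right_mono[OF less_imp_le[OF assms(8)] zero_le_power2]]
    by (simp add: f_def)
  have "spec_norm (imbalance (gd_step L Phi eta W) l - imbalance W l)
      \<le> 8 * eta^2 * phi^2 * risk L Phi W" if "l \<in> {1..L-2}" for l
  proof -
    have "spec_norm (imbalance (gd_step L Phi eta W) l - imbalance W l)
        \<le> eta\<^sup>2 * ((spec_norm (?G (l+1)))\<^sup>2 + (spec_norm (?G l))\<^sup>2)"
      using that by (intro spec_norm_imbalance_gd_step_diff_le) auto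
    also have "\<dots> \<le> eta\<^sup>2 * (2 * phi\<^sup>2 * f\<^sup>2 + 2 * phi\<^sup>2 * f\<^sup>2)"
      using that by (intro mult_left_mono add_mono inner) auto
    finally show ?thesis
      by (simp add: risk)
  qed
  moreover have "spec_norm (imbalance (gd_step L Phi eta W) (L-1) - imbalance W (L-1))
      \<le> 2 * eta^2 * (real L + 2) * phi^2 * risk L Phi W"
  proof -
    have "1 \<le> L-1" "L-1 < L" "L-1+1 = L"
      using assms(1) by auto
    then have "spec_norm (imbalance (gd_step L Phi eta W) (L-1) - imbalance W (L-1))
        \<le> eta\<^sup>2 * ((spec_norm (?G L))\<^sup>2 + (spec_norm (?G (L-1)))\<^sup>2)"
      using spec_norm_imbalance_gd_step_diff_le[of "L-1" L Phi eta W] by simp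
    also have "\<dots> \<le> eta\<^sup>2 * (real L * phi\<^sup>2 * f\<^sup>2 + 2 * phi\<^sup>2 * f\<^sup>2)"
      using assms(1) by (intro mult_left_mono add_mono last inner) auto
    finally show ?thesis
      by (simp add: risk algebra_simps)
  qed
  ultimately show ?thesis
    by blast
qed

end
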